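(* Let $\varphi$ be any forecasting system (not necessarily computable or non-degenerate) and $\omega\in\Omega$. If $\omega$ is Martin-Löf test random for $\varphi$, then $\omega$ is Martin-Löf random for $\varphi$.
   Context: Notation: $\mathbb N_0=\{0,1,\dots\}$; $\Omega=\{0,1\}^{\mathbb N}$; $\mathbb S$ finite binary strings, $\square$ empty string, $\omega^n$ first $n$ entries of $\omega$; $[s]=\{\omega:\omega^{|s|}=s\}$, $[A]=\bigcup_{s\in A}[s]$; for $A\subseteq\mathbb N_0\times\mathbb S$, $A_n=\{s:(n,s)\in A\}$. $\mathcal I$: nonempty closed subintervals of $[0,1]$; $\overline E_I(f)=\max_{p\in I}[pf(1)+(1-p)f(0)]$. Forecasting system: any map $\varphi:\mathbb S\to\mathcal I$. Supermartingale for $\varphi$: $M:\mathbb S\to\mathbb R$ with $\overline E_{\varphi(s)}(M(s\,\cdot))\le M(s)$ for all $s$; test supermartingale: non-negative with $M(\square)=1$. $\overline P_\varphi(G)=\inf\{M(\square):M\text{ supermartingale for }\varphi,\ \liminf_nM(\omega^n)\ge\mathbb 1_G(\omega)\ \forall\omega\}$. A real map $r:\mathbb S\to\mathbb R$ is lower semicomputable if there is a recursive $q:\mathbb S\times\mathbb N_0\to\mathbb Q$, non-decreasing in the second argument, with $q(s,n)\to r(s)$. $\omega$ is Martin-Löf random for $\varphi$ if every lower semicomputable test supermartingale $T$ for $\varphi$ satisfies $\sup_nT(\omega^n)<\infty$. A Martin-Löf test for $\varphi$ is a recursively enumerable $A\subseteq\mathbb N_0\times\mathbb S$ with $\overline P_\varphi([A_n])\le2^{-n}$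 for all $n$; $\omega$ is Martin-Löf test random for $\varphi$ if $\omega\notin\bigcap_n[A_n]$ for every Martin-Löf test $A$ for $\varphi$. *)

theory Defs
  imports "HOL-Analysis.Analysis" "HOL-Library.Nat_Bijection"
begin

text \<open>recfn n f: f is a total recursive function of arity n (only its values on
argument lists of length n are meaningful).\<close>

inductive recfn :: "nat \<Rightarrow> (nat list \<Rightarrow> nat) \<Rightarrow> bool" where
  zero: "recfn n (\<lambda>_. 0)"
| succ: "recfn 1 (\<lambda>xs. Suc (hd xs))"
| proj: "i < n \<Longrightarrow> recfn n (\<lambda>xs. xs ! i)"
| comp: "recfn m f \<Longrightarrow> length gs = m \<Longrightarrow> (\<forall>g\<in>set gs. recfn n g)
         \<Longrightarrow> recfn n (\<lambda>xs. f (map (\<lambda>g. g xs) gs))"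
| prim: "recfn n f \<Longrightarrow> recfn (n + 2) g
         \<Longrightarrow> recfn (Suc n) (\<lambda>xs. rec_nat (f (tl xs)) (\<lambda>k r. g (k # r # tl xs)) (hd xs))"
| mu: "recfn (Suc n) f \<Longrightarrow> (\<forall>xs. length xs = n \<longrightarrow> (\<exists>y. f (y # xs) = 0))
         \<Longrightarrow> recfn n (\<lambda>xs. LEAST y. f (y # xs) = 0)"

text \<open>Finite binary strings are bool lists (True = 1); Omega = nat \<Rightarrow> bool.\<close>

primrec str_enc :: "bool list \<Rightarrow> nat" where
  "str_enc [] = 0"
| "str_enc (b # s) = 2 * str_enc s + (if b then 2 else 1)"

definition rat_dec :: "nat \<Rightarrow> rat" where
  "rat_dec k = (case prod_decode k of (a, b) \<Rightarrow> of_int (int_decode a) / of_nat (Suc b))"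

definition prefix_of :: "(nat \<Rightarrow> bool) \<Rightarrow> nat \<Rightarrow> bool list" where
  "prefix_of \<omega> n = map \<omega> [0..<n]"

definition cyl :: "bool list set \<Rightarrow> (nat \<Rightarrow> bool) set" where
  "cyl A = {\<omega>. \<exists>s\<in>A. prefix_of \<omega> (length s) = s}"

definition section_of :: "(nat \<times> bool list) set \<Rightarrow> nat \<Rightarrow> bool list set" where
  "section_of A n = {s. (n, s) \<in> A}"

definition recursive_rat_map :: "(bool list \<Rightarrow> nat \<Rightarrow> rat) \<Rightarrow> bool" where
  "recursive_rat_map q \<longleftrightarrow>
     (\<exists>f. recfn 2 f \<and> (\<forall>s n. q s n = rat_dec (f [str_enc s, n])))"

definition lower_semicomputable :: "(bool list \<Rightarrow> real) \<Rightarrow> bool" where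
  "lower_semicomputable r \<longleftrightarrow>
     (\<exists>q. recursive_rat_map q \<and> (\<forall>s. mono (q s)) \<and>
          (\<forall>s. (\<lambda>n. real_of_rat (q s n)) \<longlonglongrightarrow> r s))"

definition rec_enum :: "(nat \<times> bool list) set \<Rightarrow> bool" where
  "rec_enum A \<longleftrightarrow>
     (\<exists>f. recfn 2 f \<and>
          (\<forall>n s. (n, s) \<in> A \<longleftrightarrow> (\<exists>t. f [prod_encode (n, str_enc s), t] = 0)))"

definition intervals :: "real set set" where
  "intervals = {{a..b} | a b. 0 \<le> a \<and> a \<le> b \<and> b \<le> 1}"

definition forecasting_system :: "(bool list \<Rightarrow> real set) \<Rightarrow> bool" where
  "forecasting_system \<phi> \<longleftrightarrow> (\<forall>s. \<phi> s \<in> intervals)"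

definition upper_exp :: "real set \<Rightarrow> (bool \<Rightarrow> real) \<Rightarrow> real" where
  "upper_exp I f = Sup ((\<lambda>p. p * f True + (1 - p) * f False) ` I)"

definition supermartingale :: "(bool list \<Rightarrow> real set) \<Rightarrow> (bool list \<Rightarrow> real) \<Rightarrow> bool" where
  "supermartingale \<phi> M \<longleftrightarrow> (\<forall>s. upper_exp (\<phi> s) (\<lambda>x. M (s @ [x])) \<le> M s)"

definition test_supermartingale :: "(bool list \<Rightarrow> real set) \<Rightarrow> (bool list \<Rightarrow> real) \<Rightarrow> bool" where
  "test_supermartingale \<phi> M \<longleftrightarrow> supermartingale \<phi> M \<and> (\<forall>s. 0 \<le> M s) \<and> M [] = 1"

definition upper_prob :: "(bool list \<Rightarrow> real set) \<Rightarrow> (nat \<Rightarrow> bool) set \<Rightarrow> ereal" where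
  "upper_prob \<phi> G = Inf {ereal (M []) | M. supermartingale \<phi> M \<and>
      (\<forall>\<omega>. liminf (\<lambda>n. ereal (M (prefix_of \<omega> n))) \<ge> ereal (indicator G \<omega>))}"

definition mlof_random :: "(bool list \<Rightarrow> real set) \<Rightarrow> (nat \<Rightarrow> bool) \<Rightarrow> bool" where
  "mlof_random \<phi> \<omega> \<longleftrightarrow>
     (\<forall>T. test_supermartingale \<phi> T \<and> lower_semicomputable T
          \<longrightarrow> bdd_above (range (\<lambda>n. T (prefix_of \<omega> n))))"

definition mlof_test :: "(bool list \<Rightarrow> real set) \<Rightarrow> (nat \<times> bool list) set \<Rightarrow> bool" where
  "mlof_test \<phi> A \<longleftrightarrow> rec_enum A \<and>
     (\<forall>n. upper_prob \<phi> (cyl (section_of A n)) \<le> ereal ((1/2) ^ n))"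

definition mlof_test_random :: "(bool list \<Rightarrow> real set) \<Rightarrow> (nat \<Rightarrow> bool) \<Rightarrow> bool" where
  "mlof_test_random \<phi> \<omega> \<longleftrightarrow>
     (\<forall>A. mlof_test \<phi> A \<longrightarrow> \<omega> \<notin> (\<Inter>n. cyl (section_of A n)))"

end

theory Submission
  imports Defs
begin

text \<open>Let T be a lower semicomputable test supermartingale. The sets
  A_n = {s. T s > 2^n} form a Martin-Lof test. They are recursively
  enumerable uniformly in n, because T is the limit of an increasing recursive sequence of
  rationals. Their cylinders have upper probability at most 2^-n by Ville's
  inequality: T stopped the first time it exceeds 2^n and scaled by 2^-n is
  a supermartingale that is eventually at least 1 on [A_n]. If T were unbounded
  along \<omega>, then \<omega> would lie in every [A_n].\<close>

section \<open>Computable functions on lists of fixed length\<close>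

text \<open>Unlike recfn n, computable n only constrains a function on lists of length n.\<close>

definition computable :: "nat \<Rightarrow> (nat list \<Rightarrow> nat) \<Rightarrow> bool" where
  "computable n F \<longleftrightarrow> (\<exists>f. recfn n f \<and> (\<forall>xs. length xs = n \<longrightarrow> f xs = F xs))"

lemma recfn_imp_computable: "recfn n f \<Longrightarrow> computable n f"
  unfolding computable_def by blast

lemma computable_cong:
  "computable n F \<Longrightarrow> (\<And>xs. length xs = n \<Longrightarrow> F xs = G xs) \<Longrightarrow> computable n G"
  unfolding computable_def by metis

lemma computable_nth: "i < n \<Longrightarrow> computable n (\<lambda>xs. xs ! i)"
  by (rule recfn_imp_computable) (rule recfn.proj)

lemma computable_compose:
  assumes F: "computable m F" and len: "length Gs = m"
    and Gs: "\<forall>G\<in>set Gs. computable n G"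
  shows "computable n (\<lambda>xs. F (map (\<lambda>G. G xs) Gs))"
proof -
  obtain f where f: "recfn m f" "\<And>ys. length ys = m \<Longrightarrow> f ys = F ys"
    using F unfolding computable_def by blast
  obtain h where h: "\<forall>G\<in>set Gs. recfn n (h G) \<and> (\<forall>xs. length xs = n \<longrightarrow> h G xs = G xs)"
    using bchoice[OF Gs[unfolded computable_def]] by blast
  have "recfn n (\<lambda>xs. f (map (\<lambda>g. g xs) (map h Gs)))"
    using f(1) len h by (intro recfn.comp) auto
  moreover have "f (map (\<lambda>g. g xs) (map h Gs)) = F (map (\<lambda>G. G xs) Gs)" if "length xs = n" for xs
  proof -
    have "map (\<lambda>g. g xs) (map h Gs) = map (\<lambda>G. G xs) Gs"
      using h that by simp
    then show ?thesis
      using f(2)[of "map (\<lambda>G. G xs) Gs"] len by (simp only: length_map)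
  qed
  ultimately show ?thesis
    unfolding computable_def by blast
qed

lemma computable_compose1:
  "computable 1 (\<lambda>xs. h (xs ! 0)) \<Longrightarrow> computable n F \<Longrightarrow> computable n (\<lambda>xs. h (F xs))"
  using computable_compose[of 1 "\<lambda>xs. h (xs ! 0)" "[F]" n] by simp

lemma computable_compose2:
  "computable 2 (\<lambda>xs. h (xs ! 0) (xs ! 1)) \<Longrightarrow> computable n F \<Longrightarrow> computable n G
    \<Longrightarrow> computable n (\<lambda>xs. h (F xs) (G xs))"
  using computable_compose[of 2 "\<lambda>xs. h (xs ! 0) (xs ! 1)" "[F, G]" n] by simp

lemma computable_Suc: "computable n F \<Longrightarrow> computable n (\<lambda>xs. Suc (F xs))"
  using computable_compose[OF recfn_imp_computable[OF recfn.succ], of "[F]"] by simp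

lemma computable_const: "computable n (\<lambda>_. c)"
  by (induction c) (auto intro: recfn_imp_computable recfn.zero computable_Suc)

lemma computable_comp_recfn2:
  "recfn 2 g \<Longrightarrow> computable n F \<Longrightarrow> computable n G \<Longrightarrow> computable n (\<lambda>xs. g [F xs, G xs])"
  using computable_compose[OF recfn_imp_computable, of 2 g "[F, G]" n] by simp

lemma computable_rec_nat:
  assumes F: "computable n F" and G: "computable (n + 2) G"
  shows "computable (Suc n) (\<lambda>xs. rec_nat (F (tl xs)) (\<lambda>k r. G (k # r # tl xs)) (hd xs))"
proof -
  obtain f where f: "recfn n f" "\<And>ys. length ys = n \<Longrightarrow> f ys = F ys"
    using F unfolding computable_def by blast
  obtain g where g: "recfn (n + 2) g" "\<And>ys. length ys = n + 2 \<Longrightarrow> g ys = G ys"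
    using G unfolding computable_def by blast
  have "recfn (Suc n) (\<lambda>xs. rec_nat (f (tl xs)) (\<lambda>k r. g (k # r # tl xs)) (hd xs))"
    using f(1) g(1) by (rule recfn.prim)
  moreover have "rec_nat (f (tl xs)) (\<lambda>k r. g (k # r # tl xs)) (hd xs)
      = rec_nat (F (tl xs)) (\<lambda>k r. G (k # r # tl xs)) (hd xs)" if "length xs = Suc n" for xs
    using f(2) g(2) that by simp
  ultimately show ?thesis
    unfolding computable_def by blast
qed

lemma computable_Least:
  assumes F: "computable (Suc n) F" and ex: "\<And>xs. length xs = n \<Longrightarrow> \<exists>y. F (y # xs) = 0"
  shows "computable n (\<lambda>xs. LEAST y. F (y # xs) = 0)"
proof -
  obtain f where f: "recfn (Suc n) f" "\<And>ys. length ys = Suc n \<Longrightarrow> f ys = F ys"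
    using F unfolding computable_def by blast
  have "recfn n (\<lambda>xs. LEAST y. f (y # xs) = 0)"
    using f ex by (intro recfn.mu) auto
  moreover have "(LEAST y. f (y # xs) = 0) = (LEAST y. F (y # xs) = 0)" if "length xs = n" for xs
    using f(2) that by simp
  ultimately show ?thesis
    unfolding computable_def by blast
qed

lemma computable_unary_rec:
  assumes g: "computable 2 (\<lambda>xs. g (xs ! 0) (xs ! 1))"
    and h: "h 0 = c" "\<And>x. h (Suc x) = g x (h x)"
  shows "computable 1 (\<lambda>xs. h (xs ! 0))"
proof (rule computable_cong)
  show "computable 1 (\<lambda>xs. rec_nat c (\<lambda>k r. g k r) (hd xs))"
    using computable_rec_nat[of 0 "\<lambda>_. c" "\<lambda>xs. g (xs ! 0) (xs ! 1)"] g
    by (simp add: computable_const numeral_2_eq_2)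
  have "rec_nat c (\<lambda>k r. g k r) x = h x" for x
    by (induction x) (simp_all add: h)
  then show "rec_nat c (\<lambda>k r. g k r) (hd xs) = h (xs ! 0)" if "length xs = 1" for xs
    using that by (auto simp: length_Suc_conv)
qed

lemma computable_binary_rec:
  assumes f: "computable 1 (\<lambda>xs. f (xs ! 0))"
    and g: "computable 3 (\<lambda>xs. g (xs ! 0) (xs ! 1) (xs ! 2))"
    and h: "\<And>y. h 0 y = f y" "\<And>x y. h (Suc x) y = g x (h x y) y"
  shows "computable 2 (\<lambda>xs. h (xs ! 0) (xs ! 1))"
proof (rule computable_cong)
  show "computable 2 (\<lambda>xs. rec_nat (f (tl xs ! 0)) (\<lambda>k r. g k r (tl xs ! 0)) (hd xs))"
    using computable_rec_nat[of 1 "\<lambda>xs. f (xs ! 0)" "\<lambda>xs. g (xs ! 0) (xs ! 1) (xs ! 2)"] f g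
    by (simp add: numeral_2_eq_2 numeral_3_eq_3)
  have "rec_nat (f y) (\<lambda>k r. g k r y) x = h x y" for x y
    by (induction x) (simp_all add: h)
  then show "rec_nat (f (tl xs ! 0)) (\<lambda>k r. g k r (tl xs ! 0)) (hd xs) = h (xs ! 0) (xs ! 1)"
    if "length xs = 2" for xs
    using that by (auto simp: numeral_2_eq_2 length_Suc_conv)
qed

lemma computable_add: "computable n F \<Longrightarrow> computable n G \<Longrightarrow> computable n (\<lambda>xs. F xs + G xs)"
proof (erule computable_compose2[where h = "(+)", rotated])
  show "computable 2 (\<lambda>xs. xs ! 0 + xs ! 1)"
    by (rule computable_binary_rec[where f = "\<lambda>y. y" and g = "\<lambda>x r y. Suc r"])
      (simp_all add: computable_nth computable_Suc)
qed

lemma computable_mult: "computable n F \<Longrightarrow> computable n G \<Longrightarrow> computable n (\<lambda>xs. F xs * G xs)"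
proof (erule computable_compose2[where h = "(*)", rotated])
  show "computable 2 (\<lambda>xs. xs ! 0 * xs ! 1)"
    by (rule computable_binary_rec[where f = "\<lambda>y. 0" and g = "\<lambda>x r y. r + y"])
      (simp_all add: computable_nth computable_const computable_add)
qed

lemma computable_diff:
  assumes "computable n F" "computable n G"
  shows "computable n (\<lambda>xs. F xs - G xs)"
proof -
  have "computable 1 (\<lambda>xs. xs ! 0 - 1)"
    by (rule computable_unary_rec[where h = "\<lambda>x. x - 1" and g = "\<lambda>x r. x"])
      (simp_all add: computable_nth)
  then have "computable 3 (\<lambda>xs. xs ! 1 - 1)"
    using computable_compose1[where h = "\<lambda>x. x - 1", OF _ computable_nth[of 1 3]] by simp
  then have "computable 2 (\<lambda>xs. xs ! 1 - xs ! 0)"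
    by (intro computable_binary_rec[where h = "\<lambda>x y. y - x" and f = "\<lambda>y. y" and g = "\<lambda>x r y. r - 1"])
      (simp_all add: computable_nth)
  then show ?thesis
    using computable_compose2[where h = "\<lambda>x y. y - x", of n G F] assms by simp
qed

lemma computable_mod2: "computable n F \<Longrightarrow> computable n (\<lambda>xs. F xs mod 2)"
proof (erule computable_compose1[rotated])
  show "computable 1 (\<lambda>xs. xs ! 0 mod 2)"
    by (rule computable_unary_rec[where h = "\<lambda>x. x mod 2" and g = "\<lambda>x r. 1 - r"])
      (simp_all add: computable_nth computable_const computable_diff mod_Suc)
qed

lemma computable_power2: "computable n F \<Longrightarrow> computable n (\<lambda>xs. 2 ^ F xs)"
proof (erule computable_compose1[rotated])
  show "computable 1 (\<lambda>xs. 2 ^ (xs ! 0))"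
    by (rule computable_unary_rec[where h = "\<lambda>x. 2 ^ x" and g = "\<lambda>x r. r + r"])
      (simp_all add: computable_nth computable_add)
qed

lemma computable_triangle: "computable n F \<Longrightarrow> computable n (\<lambda>xs. triangle (F xs))"
proof (erule computable_compose1[rotated])
  show "computable 1 (\<lambda>xs. triangle (xs ! 0))"
    by (rule computable_unary_rec[where h = triangle and g = "\<lambda>x r. r + Suc x"])
      (simp_all add: computable_nth computable_add computable_Suc)
qed

definition diagonal :: "nat \<Rightarrow> nat" where
  "diagonal x = (LEAST d. x < triangle (Suc d))"

lemma triangle_mono: "m \<le> n \<Longrightarrow> triangle m \<le> triangle n"
  unfolding triangle_def by (intro div_le_mono mult_le_mono) auto

lemma diagonal_prod_encode: "diagonal (prod_encode (a, b)) = a + b"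
  unfolding diagonal_def
proof (rule Least_equality)
  show "prod_encode (a, b) < triangle (Suc (a + b))"
    by (simp add: prod_encode_def)
next
  fix d assume "prod_encode (a, b) < triangle (Suc d)"
  moreover have "triangle (Suc d) \<le> prod_encode (a, b)" if "Suc d \<le> a + b"
    using triangle_mono[OF that] by (simp add: prod_encode_def)
  ultimately show "a + b \<le> d"
    by (meson not_less not_less_eq_eq)
qed

lemma computable_diagonal: "computable n F \<Longrightarrow> computable n (\<lambda>xs. diagonal (F xs))"
proof (erule computable_compose1[rotated])
  have "computable (Suc 1) (\<lambda>xs. Suc (xs ! 1) - triangle (Suc (xs ! 0)))"
    by (intro computable_diff computable_Suc computable_nth computable_triangle) simp_all
  then have "computable 1 (\<lambda>xs. LEAST d. Suc ((d # xs) ! 1) - triangle (Suc ((d # xs) ! 0)) = 0)"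
  proof (rule computable_Least)
    show "\<exists>d. Suc ((d # xs) ! 1) - triangle (Suc ((d # xs) ! 0)) = 0" for xs :: "nat list"
      by (rule exI[of _ "xs ! 0"]) (induction "xs ! 0", auto)
  qed
  then show "computable 1 (\<lambda>xs. diagonal (xs ! 0))"
    by (rule computable_cong) (simp add: diagonal_def less_Suc_eq_le)
qed

lemma prod_decode_eq_diagonal:
  "prod_decode x = (x - triangle (diagonal x), diagonal x - (x - triangle (diagonal x)))"
proof -
  obtain a b where ab: "prod_decode x = (a, b)"
    by fastforce
  then have x: "x = prod_encode (a, b)"
    by (metis prod_decode_inverse)
  then have "diagonal x = a + b"
    by (simp add: diagonal_prod_encode)
  then show ?thesis
    using ab x by (simp add: prod_encode_def)
qed

lemma computable_fst_prod_decode: "computable n F \<Longrightarrow> computable n (\<lambda>xs. fst (prod_decode (F xs)))"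
  unfolding prod_decode_eq_diagonal by (simp add: computable_diff computable_triangle computable_diagonal)

lemma computable_snd_prod_decode: "computable n F \<Longrightarrow> computable n (\<lambda>xs. snd (prod_decode (F xs)))"
  unfolding prod_decode_eq_diagonal by (simp add: computable_diff computable_triangle computable_diagonal)

section \<open>Enumerating where a lower semicomputable function is large\<close>

lemma of_nat_less_rat_dec_iff:
  "real m < real_of_rat (rat_dec v) \<longleftrightarrow>
    even (fst (prod_decode v)) \<and> 2 * m * Suc (snd (prod_decode v)) < fst (prod_decode v)"
proof -
  obtain a b where ab: "prod_decode v = (a, b)"
    by fastforce
  have dec: "real_of_rat (rat_dec v) = real_of_int (int_decode a) / real (Suc b)"
    unfolding rat_dec_def ab by (simp add: of_rat_divide del: of_nat_Suc)
  show ?thesis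
  proof (cases "even a")
    case True
    then have "int_decode a = int (a div 2)"
      by (simp add: int_decode_def sum_decode_def)
    then have "real m < real_of_rat (rat_dec v) \<longleftrightarrow> real m * real (Suc b) < real (a div 2)"
      unfolding dec by (simp add: pos_less_divide_eq del: of_nat_Suc)
    also have "\<dots> \<longleftrightarrow> m * Suc b < a div 2"
      by (metis of_nat_less_iff of_nat_mult)
    also have "\<dots> \<longleftrightarrow> 2 * m * Suc b < a"
      using True by auto
    finally show ?thesis
      using True ab by simp
  next
    case False
    then have "int_decode a < 0"
      by (simp add: int_decode_def sum_decode_def)
    then have "real_of_rat (rat_dec v) < 0"
      unfolding dec by (simp add: divide_neg_pos del: of_nat_Suc)
    then have "\<not> real m < real_of_rat (rat_dec v)"
      using of_nat_0_le_iff[of m] by linarith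
    then show ?thesis
      using False ab by simp
  qed
qed

lemma incseq_tendsto_less_iff:
  fixes X :: "nat \<Rightarrow> 'a :: linorder_topology"
  assumes "incseq X" "X \<longlonglongrightarrow> L"
  shows "(\<exists>k. a < X k) \<longleftrightarrow> a < L"
proof
  show "\<exists>k. a < X k \<Longrightarrow> a < L"
    using assms incseq_le order_less_le_trans by blast
  assume "a < L"
  then obtain N where "\<forall>k\<ge>N. a < X k"
    using order_tendstoD(1)[OF assms(2)] unfolding eventually_sequentially by blast
  then show "\<exists>k. a < X k"
    by blast
qed

lemma rec_enum_exceeding_power2:
  assumes "lower_semicomputable T"
  shows "rec_enum {(n, s). (2::real) ^ n < T s}"
proof -
  obtain q where q: "recursive_rat_map q" "\<And>s. mono (q s)"
    "\<And>s. (\<lambda>k. real_of_rat (q s k)) \<longlonglongrightarrow> T s"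
    using assms unfolding lower_semicomputable_def by blast
  obtain g where g: "recfn 2 g" "\<And>s k. q s k = rat_dec (g [str_enc s, k])"
    using q(1) unfolding recursive_rat_map_def by blast
  have exceeds_iff: "(2::real) ^ n < T s \<longleftrightarrow> (\<exists>k. 2 ^ n < real_of_rat (q s k))" for n s
    using q(2,3) by (intro incseq_tendsto_less_iff[symmetric])
      (auto simp: mono_def incseq_def of_rat_less_eq)
  define e where "e xs = fst (prod_decode (xs ! 0))" for xs :: "nat list"
  define v where "v xs = g [snd (prod_decode (xs ! 0)), xs ! 1]" for xs :: "nat list"
  \<comment> \<open>with truncated subtraction, 1 - (a - b) vanishes iff b < a\<close>
  define F where "F xs = fst (prod_decode (v xs)) mod 2
      + (1 - (fst (prod_decode (v xs)) - 2 * 2 ^ e xs * Suc (snd (prod_decode (v xs)))))" for xs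
  have "computable 2 F"
    unfolding F_def e_def v_def
    by (intro computable_add computable_mod2 computable_diff computable_mult computable_Suc
        computable_power2 computable_const computable_nth computable_comp_recfn2[OF g(1)]
        computable_fst_prod_decode computable_snd_prod_decode) simp_all
  then obtain f where f: "recfn 2 f" "\<And>xs. length xs = 2 \<Longrightarrow> f xs = F xs"
    unfolding computable_def by blast
  have f_zero_iff: "f [prod_encode (n, str_enc s), k] = 0 \<longleftrightarrow> (2::real) ^ n < real_of_rat (q s k)"
    for n s k
    using of_nat_less_rat_dec_iff[of "2 ^ n"]
    by (simp add: f(2) F_def e_def v_def g(2) Suc_le_eq even_iff_mod_2_eq_zero)
  then show ?thesis
    unfolding rec_enum_def using f(1) by (intro exI[of _ f]) (simp add: exceeds_iff f_zero_iff)
qed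

section \<open>Supermartingales and Ville's inequality\<close>

lemma upper_exp_le_iff:
  assumes "I \<in> intervals"
  shows "upper_exp I f \<le> y \<longleftrightarrow> (\<forall>p\<in>I. p * f True + (1 - p) * f False \<le> y)"
proof -
  obtain a b where I: "I = {a..b}" "a \<le> b"
    using assms unfolding intervals_def by auto
  have "bdd_above ((\<lambda>p. p * f True + (1 - p) * f False) ` I)"
    unfolding I(1)
    by (intro bounded_imp_bdd_above compact_imp_bounded compact_continuous_image continuous_intros)
      simp
  then show ?thesis
    unfolding upper_exp_def using I by (subst cSup_le_iff) auto
qed

lemma supermartingale_iff:
  assumes "forecasting_system \<phi>"
  shows "supermartingale \<phi> M \<longleftrightarrow>
    (\<forall>s. \<forall>p\<in>\<phi> s. p * M (s @ [True]) + (1 - p) * M (s @ [False]) \<le> M s)"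
  using assms by (simp add: supermartingale_def forecasting_system_def upper_exp_le_iff)

lemma supermartingale_const_mult:
  assumes "forecasting_system \<phi>" "supermartingale \<phi> M" "0 \<le> c"
  shows "supermartingale \<phi> (\<lambda>s. c * M s)"
proof -
  have "c * (p * M (s @ [True]) + (1 - p) * M (s @ [False])) \<le> c * M s" if "p \<in> \<phi> s" for s p
    using assms that by (intro mult_left_mono) (auto simp: supermartingale_iff)
  then show ?thesis
    using assms(1) by (simp add: supermartingale_iff algebra_simps)
qed

definition stopped_above :: "real \<Rightarrow> (bool list \<Rightarrow> real) \<Rightarrow> bool list \<Rightarrow> real" where
  "stopped_above c T s =
    (if \<exists>j\<le>length s. c < T (take j s) then T (take (LEAST j. c < T (take j s)) s) else T s)"

lemma stopped_above_Nil [simp]: "stopped_above c T [] = T []"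
  by (simp add: stopped_above_def)

lemma stopped_above_nonneg: "(\<And>s. 0 \<le> T s) \<Longrightarrow> 0 \<le> stopped_above c T s"
  by (simp add: stopped_above_def)

lemma stopped_above_of_not_stopped:
  "\<not> (\<exists>j\<le>length s. c < T (take j s)) \<Longrightarrow> stopped_above c T s = T s"
  unfolding stopped_above_def by (rule if_not_P)

lemma stopped_above_gt:
  assumes "j \<le> length s" "c < T (take j s)"
  shows "c < stopped_above c T s"
  using assms LeastI[of "\<lambda>j. c < T (take j s)"] by (auto simp: stopped_above_def)

lemma stopped_above_snoc_of_stopped:
  assumes "\<exists>j\<le>length s. c < T (take j s)"
  shows "stopped_above c T (s @ [x]) = stopped_above c T s"
proof -
  let ?L = "LEAST j. c < T (take j s)"
  obtain i where i: "i \<le> length s" "c < T (take i s)"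
    using assms by blast
  have "?L \<le> i"
    using i(2) by (rule Least_le)
  then have L: "c < T (take ?L s)" "?L \<le> length s"
    using i by (auto intro: LeastI)
  have stopped_snoc: "\<exists>j\<le>length (s @ [x]). c < T (take j (s @ [x]))"
    using L by (intro exI[of _ ?L]) auto
  have "(LEAST j. c < T (take j (s @ [x]))) = ?L"
  proof (rule Least_equality)
    show "c < T (take ?L (s @ [x]))"
      using L by simp
    show "?L \<le> j" if "c < T (take j (s @ [x]))" for j
    proof (rule ccontr)
      assume "\<not> ?L \<le> j"
      then have "c < T (take j s)"
        using that L(2) by simp
      then have "?L \<le> j"
        by (rule Least_le)
      with \<open>\<not> ?L \<le> j\<close> show False ..
    qed
  qed
  then show ?thesis
    unfolding stopped_above_def if_P[OF stopped_snoc] if_P[OF assms] using L(2) by simp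
qed

lemma stopped_above_snoc_of_not_stopped:
  assumes "\<not> (\<exists>j\<le>length s. c < T (take j s))"
  shows "stopped_above c T (s @ [x]) = T (s @ [x])"
proof (cases "\<exists>j\<le>length (s @ [x]). c < T (take j (s @ [x]))")
  case True
  have "(LEAST j. c < T (take j (s @ [x]))) = Suc (length s)"
  proof (rule Least_equality)
    show "c < T (take (Suc (length s)) (s @ [x]))"
      using True assms by (auto simp: le_Suc_eq)
    show "Suc (length s) \<le> j" if "c < T (take j (s @ [x]))" for j
    proof (rule ccontr)
      assume "\<not> Suc (length s) \<le> j"
      then have "j \<le> length s" "take j (s @ [x]) = take j s"
        by auto
      with that assms show False
        by auto
    qed
  qed
  then show ?thesis
    using True by (simp add: stopped_above_def)
qed (rule stopped_above_of_not_stopped)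

lemma supermartingale_stopped_above:
  assumes \<phi>: "forecasting_system \<phi>" and T: "supermartingale \<phi> T"
  shows "supermartingale \<phi> (stopped_above c T)"
  unfolding supermartingale_iff[OF \<phi>]
proof (intro allI ballI)
  fix s p assume p: "p \<in> \<phi> s"
  show "p * stopped_above c T (s @ [True]) + (1 - p) * stopped_above c T (s @ [False])
      \<le> stopped_above c T s"
  proof (cases "\<exists>j\<le>length s. c < T (take j s)")
    case True
    then show ?thesis
      by (simp add: stopped_above_snoc_of_stopped algebra_simps)
  next
    case False
    then show ?thesis
      using T p by (simp add: stopped_above_of_not_stopped stopped_above_snoc_of_not_stopped
          supermartingale_iff[OF \<phi>])
  qed
qed

lemma length_prefix_of [simp]: "length (prefix_of \<omega> n) = n"
  by (simp add: prefix_of_def)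

lemma take_prefix_of: "take j (prefix_of \<omega> n) = prefix_of \<omega> (min j n)"
  by (simp add: prefix_of_def take_map min_def)

lemma prefix_of_in_cyl: "prefix_of \<omega> n \<in> S \<Longrightarrow> \<omega> \<in> cyl S"
  unfolding cyl_def by (intro CollectI bexI[of _ "prefix_of \<omega> n"]) simp_all

lemma upper_prob_le_supermartingale:
  assumes "supermartingale \<phi> M"
    and "\<And>\<omega>. ereal (indicator G \<omega>) \<le> liminf (\<lambda>n. ereal (M (prefix_of \<omega> n)))"
  shows "upper_prob \<phi> G \<le> ereal (M [])"
  unfolding upper_prob_def using assms by (intro Inf_lower) auto

lemma ville_inequality:
  assumes \<phi>: "forecasting_system \<phi>" and T: "test_supermartingale \<phi> T"
    and c: "0 < c" and S: "\<forall>s\<in>S. c < T s"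
  shows "upper_prob \<phi> (cyl S) \<le> ereal (1 / c)"
proof -
  define M where "M s = inverse c * stopped_above c T s" for s
  have "supermartingale \<phi> M"
    unfolding M_def using T c
    by (intro supermartingale_const_mult[OF \<phi>] supermartingale_stopped_above[OF \<phi>])
      (auto simp: test_supermartingale_def)
  moreover have "ereal (indicator (cyl S) \<omega>) \<le> liminf (\<lambda>n. ereal (M (prefix_of \<omega> n)))" for \<omega>
  proof (cases "\<omega> \<in> cyl S")
    case True
    then obtain s where s: "s \<in> S" "prefix_of \<omega> (length s) = s"
      unfolding cyl_def by blast
    have "1 \<le> M (prefix_of \<omega> n)" if "length s \<le> n" for n
    proof -
      have "c < stopped_above c T (prefix_of \<omega> n)"
        using S s that by (intro stopped_above_gt[of "length s"]) (auto simp: take_prefix_of min_def)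
      then show ?thesis
        using c by (simp add: M_def field_simps)
    qed
    then have "\<forall>\<^sub>F n in sequentially. ereal 1 \<le> ereal (M (prefix_of \<omega> n))"
      unfolding eventually_sequentially by auto
    then show ?thesis
      using True by (simp add: Liminf_bounded)
  next
    case False
    have "\<forall>\<^sub>F n in sequentially. ereal 0 \<le> ereal (M (prefix_of \<omega> n))"
      using T c by (simp add: M_def test_supermartingale_def stopped_above_nonneg)
    then show ?thesis
      using False by (simp add: Liminf_bounded)
  qed
  ultimately have "upper_prob \<phi> (cyl S) \<le> ereal (M [])"
    by (rule upper_prob_le_supermartingale)
  also have "M [] = 1 / c"
    using T by (simp add: M_def test_supermartingale_def inverse_eq_divide)
  finally show ?thesis .
qed

lemma mlof_test_exceeding_power2:
  assumes "forecasting_system \<phi>" "test_supermartingale \<phi> T" "lower_semicomputable T"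
  shows "mlof_test \<phi> {(n, s). (2::real) ^ n < T s}"
  unfolding mlof_test_def
proof (intro conjI allI)
  show "rec_enum {(n, s). (2::real) ^ n < T s}"
    using assms(3) by (rule rec_enum_exceeding_power2)
  fix n
  have "upper_prob \<phi> (cyl {s. 2 ^ n < T s}) \<le> ereal (1 / 2 ^ n)"
    using assms(1,2) by (rule ville_inequality) auto
  then show "upper_prob \<phi> (cyl (section_of {(n, s). 2 ^ n < T s} n)) \<le> ereal ((1 / 2) ^ n)"
    by (simp add: section_of_def power_one_over)
qed

theorem proposition6p1:
  fixes \<phi> :: "bool list \<Rightarrow> real set" and \<omega> :: "nat \<Rightarrow> bool"
  assumes "forecasting_system \<phi>"
    and "mlof_test_random \<phi> \<omega>"
  shows "mlof_random \<phi> \<omega>"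
  unfolding mlof_random_def
proof (intro allI impI)
  fix T assume T: "test_supermartingale \<phi> T \<and> lower_semicomputable T"
  define A where "A = {(n, s). (2::real) ^ n < T s}"
  have "mlof_test \<phi> A"
    unfolding A_def using assms(1) T by (intro mlof_test_exceeding_power2) auto
  then obtain n where "\<omega> \<notin> cyl (section_of A n)"
    using assms(2) unfolding mlof_test_random_def by blast
  then have "prefix_of \<omega> m \<notin> section_of A n" for m
    using prefix_of_in_cyl by blast
  then have "T (prefix_of \<omega> m) \<le> 2 ^ n" for m
    by (simp add: A_def section_of_def not_less)
  then show "bdd_above (range (\<lambda>m. T (prefix_of \<omega> m)))"
    by (intro bdd_aboveI2)
qed

end
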